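(* Let $(p,s)$ be $(1,2)$ or $(2,1)$, let $r,t\in S$ (initial and target state), and let $\overline{f_1},\overline{f_2}$ be reals. For a state $u$ from which $t$ is reachable, let $\pi^p_u$ be a $u$-$t$ path lexicographically minimal in $(\mathit{cost}_p,\mathit{cost}_s)$ and $\pi^s_u$ a $u$-$t$ path lexicographically minimal in $(\mathit{cost}_s,\mathit{cost}_p)$, and set $h_p(u)=\mathit{cost}_p(\pi^p_u)$, $ub_s(u)=\mathit{cost}_s(\pi^p_u)$, $h_s(u)=\mathit{cost}_s(\pi^s_u)$, $ub_p(u)=\mathit{cost}_p(\pi^s_u)$. Let $P$ be a path from $r$ to $u$ with $g_q=\mathit{cost}_q(P)$, which is valid, i.e. $g_1+h_1(u)\le\overline{f_1}$ and $g_2+h_2(u)\le\overline{f_2}$, and which is terminal, i.e. $h_p(u)=ub_p(u)$. Then $P$ is a tentative solution: $g_s+ub_s(u)\le\overline{f_s}$, so that $P$ followed by $\pi^p_u$ is an $r$-$t$ path with $\mathit{cost}_p=g_p+h_p(u)\le\overline{f_p}$ and $\mathit{cost}_s\le\overline{f_s}$.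
   Context: $G=(S,E)$ is a directed graph with non-negative edge costs $\mathit{cost}_1,\mathit{cost}_2$; a path is a sequence of states with consecutive pairs in $E$, and $\mathit{cost}_q$ of a path is the sum of $\mathit{cost}_q$ over its edges. *)

theory Defs
  imports Complex_Main
begin

definition is_path :: "'a set \<Rightarrow> ('a \<times> 'a) set \<Rightarrow> 'a list \<Rightarrow> bool" where
  "is_path S E xs \<longleftrightarrow> xs \<noteq> [] \<and> set xs \<subseteq> S \<and>
     (\<forall>i. Suc i < length xs \<longrightarrow> (xs ! i, xs ! Suc i) \<in> E)"

definition path_from_to :: "'a set \<Rightarrow> ('a \<times> 'a) set \<Rightarrow> 'a \<Rightarrow> 'a \<Rightarrow> 'a list \<Rightarrow> bool" where
  "path_from_to S E u v xs \<longleftrightarrow> is_path S E xs \<and> hd xs = u \<and> last xs = v"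

definition path_cost :: "('a \<Rightarrow> 'a \<Rightarrow> real) \<Rightarrow> 'a list \<Rightarrow> real" where
  "path_cost c xs = (\<Sum>i < length xs - 1. c (xs ! i) (xs ! Suc i))"

definition lex_min_path ::
  "'a set \<Rightarrow> ('a \<times> 'a) set \<Rightarrow> ('a \<Rightarrow> 'a \<Rightarrow> real) \<Rightarrow> ('a \<Rightarrow> 'a \<Rightarrow> real) \<Rightarrow> 'a \<Rightarrow> 'a \<Rightarrow> 'a list \<Rightarrow> bool" where
  "lex_min_path S E c c' u v w \<longleftrightarrow> path_from_to S E u v w \<and>
     (\<forall>w'. path_from_to S E u v w' \<longrightarrow>
        path_cost c w < path_cost c w' \<or>
        (path_cost c w = path_cost c w' \<and> path_cost c' w \<le> path_cost c' w'))"

end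

theory Submission
  imports Defs
begin

text \<open>Since \<open>\<pi>\<^sup>p\<^sub>u\<close> and \<open>\<pi>\<^sup>s\<^sub>u\<close> are both \<open>u\<close>-\<open>t\<close> paths and the path is terminal, they have the same
  primary cost; the tie-break of the lexicographic minimality of \<open>\<pi>\<^sup>p\<^sub>u\<close> then gives
  \<open>ub\<^sub>s(u) \<le> h\<^sub>s(u)\<close>, so validity in the secondary cost carries over from \<open>\<pi>\<^sup>s\<^sub>u\<close> to \<open>\<pi>\<^sup>p\<^sub>u\<close>.\<close>

lemma path_cost_singleton [simp]: "path_cost c [x] = 0"
  by (simp add: path_cost_def)

lemma path_cost_Cons_Cons [simp]:
  "path_cost c (x # y # xs) = c x y + path_cost c (y # xs)"
  unfolding path_cost_def by (simp add: sum.lessThan_Suc_shift del: sum.lessThan_Suc)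

lemma path_cost_append:
  assumes "P \<noteq> []" "Q \<noteq> []" "last P = hd Q"
  shows "path_cost c (P @ tl Q) = path_cost c P + path_cost c Q"
  using assms
proof (induction P rule: induct_list012)
  case (2 x)
  then show ?case by (cases Q) auto
qed simp_all

lemma is_path_singleton [simp]: "is_path S E [x] \<longleftrightarrow> x \<in> S"
  unfolding is_path_def by auto

lemma is_path_Cons_Cons [simp]:
  "is_path S E (x # y # xs) \<longleftrightarrow> x \<in> S \<and> (x, y) \<in> E \<and> is_path S E (y # xs)"
  unfolding is_path_def by (auto simp: less_Suc_eq_0_disj)

lemma is_path_append:
  assumes "is_path S E P" "is_path S E Q" "last P = hd Q"
  shows "is_path S E (P @ tl Q)"
  using assms
proof (induction P rule: induct_list012)
  case 1
  then show ?case by (simp add: is_path_def)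
next
  case (2 x)
  then show ?case by (cases Q) auto
qed simp

lemma last_append_tl:
  assumes "P \<noteq> []" "Q \<noteq> []" "last P = hd Q"
  shows "last (P @ tl Q) = last Q"
  using assms by (cases Q) auto

lemma path_from_to_append:
  assumes "path_from_to S E u v P" "path_from_to S E v w Q"
  shows "path_from_to S E u w (P @ tl Q)"
proof -
  have "P \<noteq> []" "Q \<noteq> []" "last P = hd Q"
    using assms by (auto simp: path_from_to_def is_path_def)
  then show ?thesis
    using assms is_path_append last_append_tl by (fastforce simp: path_from_to_def)
qed

lemma path_cost_append_path_from_to:
  assumes "path_from_to S E u v P" "path_from_to S E v w Q"
  shows "path_cost c (P @ tl Q) = path_cost c P + path_cost c Q"
  using assms by (intro path_cost_append) (auto simp: path_from_to_def is_path_def)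

lemma lex_min_path_imp_path_from_to:
  "lex_min_path S E c c' u v w \<Longrightarrow> path_from_to S E u v w"
  by (simp add: lex_min_path_def)

lemma lex_min_path_tie_break:
  assumes "lex_min_path S E c c' u v w" "path_from_to S E u v w'"
    and "path_cost c w = path_cost c w'"
  shows "path_cost c' w \<le> path_cost c' w'"
  using assms unfolding lex_min_path_def by fastforce

theorem lemma11:
  fixes S :: "'a set" and E :: "('a \<times> 'a) set"
    and cost :: "nat \<Rightarrow> 'a \<Rightarrow> 'a \<Rightarrow> real" and fbar :: "nat \<Rightarrow> real"
    and p s :: nat and r t u :: 'a and P pip pis :: "'a list"
  assumes E_sub: "E \<subseteq> S \<times> S"
    and nonneg: "\<And>q x y. q \<in> {1, 2} \<Longrightarrow> (x, y) \<in> E \<Longrightarrow> cost q x y \<ge> 0"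
    and ps: "(p, s) = (1, 2) \<or> (p, s) = (2, 1)"
    and r: "r \<in> S" and t: "t \<in> S"
    and pip: "lex_min_path S E (cost p) (cost s) u t pip"
    and pis: "lex_min_path S E (cost s) (cost p) u t pis"
    and P: "path_from_to S E r u P"
    and valid_p: "path_cost (cost p) P + path_cost (cost p) pip \<le> fbar p"
    and valid_s: "path_cost (cost s) P + path_cost (cost s) pis \<le> fbar s"
    and terminal: "path_cost (cost p) pip = path_cost (cost p) pis"
  shows "path_cost (cost s) P + path_cost (cost s) pip \<le> fbar s
    \<and> path_from_to S E r t (P @ tl pip)
    \<and> path_cost (cost p) (P @ tl pip) = path_cost (cost p) P + path_cost (cost p) pip
    \<and> path_cost (cost p) (P @ tl pip) \<le> fbar p
    \<and> path_cost (cost s) (P @ tl pip) \<le> fbar s"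
proof -
  have pip_path: "path_from_to S E u t pip"
    using pip by (rule lex_min_path_imp_path_from_to)
  have "path_cost (cost s) pip \<le> path_cost (cost s) pis"
    using pip lex_min_path_imp_path_from_to[OF pis] terminal by (rule lex_min_path_tie_break)
  then have tentative: "path_cost (cost s) P + path_cost (cost s) pip \<le> fbar s"
    using valid_s by linarith
  have concat_cost: "\<And>c. path_cost c (P @ tl pip) = path_cost c P + path_cost c pip"
    using P pip_path by (rule path_cost_append_path_from_to)
  show ?thesis
    using tentative path_from_to_append[OF P pip_path] concat_cost valid_p by simp
qed

end
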